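(* Let $1\le p<\infty$. Let $\boldsymbol{u}=(u_k)_{k\ge0}$ be an admissible sequence of polynomials in $\ell_p$ such that there exist $C>0$ and $0<\tau<1$ with $\|u_k\|_p\le C\tau^k$ for all $k\in\mathbb{N}$. Let $X$ be a complex random variable whose support is the whole complex plane and which satisfies: for some $\beta>0$, $\limsup_{r\to\infty}\big((\log r)^{1+\beta}\,\mathbb{P}(|X|\ge r)\big)<+\infty$. Let $(X_k)_{k\ge0}$ be a sequence of independent copies of $X$. Then, almost surely, the vector $v=\sum_{k\ge0}X_ku_k$ belongs to $E_p[\boldsymbol{u}]\subset\ell_p$. Moreover, for every $h\in c_{00}$ and every $\eta>0$, almost surely there exists a (realization-dependent) set $A\subseteq\mathbb{N}$ whose natural density exists and is positive such that $\|T_n(B[\boldsymbol{u}]^n)(v)-h\|_p<\eta$ for all $n\in A$.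
   Context: $\ell_p$ is the Banach space of complex sequences $x=(x_n)_{n\ge0}$ with $\|x\|_p=(\sum|x_n|^p)^{1/p}<\infty$, with unit vectors $(e_n)_{n\ge0}$; $c_{00}$ is the subspace of finitely supported sequences ("polynomials"); for nonzero $x\in c_{00}$, $\deg(x)=\max\{n: x_n\ne0\}$. A sequence $(u_k)_{k\ge0}$ in $c_{00}$ is admissible if $u_0=e_0$, $\deg(u_k)=k$ for $k\ge1$, and $\sum_k\|u_k\|_p<\infty$. $E_p[\boldsymbol{u}]=\{\sum_k x_ku_k: \sum_k|x_k|\|u_k\|_p<\infty\}$. $B[\boldsymbol{u}]$ is the operator on $E_p[\boldsymbol{u}]$ with $B[\boldsymbol{u}]u_0=0$, $B[\boldsymbol{u}]u_k=u_{k-1}$ ($k\ge1$). $T_n(B[\boldsymbol{u}]^n):E_p[\boldsymbol{u}]\to\ell_p$ is defined by $T_n(B[\boldsymbol{u}]^n)(\sum_{k\ge0}X_ku_k)=\sum_{k=0}^nX_{k+n}u_k$. The support of $X$ is the whole plane means $\mathbb{P}(X\in U)>0$ for every nonempty open $U\subset\mathbb{C}$. Natural density of $A\subseteq\mathbb{N}$: $\lim_n\#(A\cap[1,n])/n$. *)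

theory Defs
  imports "HOL-Probability.Probability"
begin

definition lp_norm :: "real \<Rightarrow> (nat \<Rightarrow> complex) \<Rightarrow> real" where
  "lp_norm p x = (\<Sum>n. norm (x n) powr p) powr (1 / p)"

definition in_lp :: "real \<Rightarrow> (nat \<Rightarrow> complex) \<Rightarrow> bool" where
  "in_lp p x \<longleftrightarrow> summable (\<lambda>n. norm (x n) powr p)"

definition unit_vec :: "nat \<Rightarrow> nat \<Rightarrow> complex" where
  "unit_vec k = (\<lambda>n. if n = k then 1 else 0)"

definition c00 :: "(nat \<Rightarrow> complex) \<Rightarrow> bool" where
  "c00 x \<longleftrightarrow> finite {n. x n \<noteq> 0}"

definition deg :: "(nat \<Rightarrow> complex) \<Rightarrow> nat" where
  "deg x = Max {n. x n \<noteq> 0}"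

definition admissible :: "real \<Rightarrow> (nat \<Rightarrow> nat \<Rightarrow> complex) \<Rightarrow> bool" where
  "admissible p u \<longleftrightarrow>
     (\<forall>k. c00 (u k)) \<and> u 0 = unit_vec 0 \<and>
     (\<forall>k\<ge>1. u k \<noteq> (\<lambda>_. 0) \<and> deg (u k) = k) \<and>
     summable (\<lambda>k. lp_norm p (u k))"

definition series_vec :: "(nat \<Rightarrow> nat \<Rightarrow> complex) \<Rightarrow> (nat \<Rightarrow> complex) \<Rightarrow> nat \<Rightarrow> complex" where
  "series_vec u x = (\<lambda>m. \<Sum>k. x k * u k m)"

definition Ep :: "real \<Rightarrow> (nat \<Rightarrow> nat \<Rightarrow> complex) \<Rightarrow> (nat \<Rightarrow> complex) set" where
  "Ep p u = {series_vec u x | x. summable (\<lambda>k. norm (x k) * lp_norm p (u k))}"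

text \<open>T_n(B[u]^n) applied to the vector with coefficient sequence x:
  sum_{k=0}^n x_{k+n} u_k.\<close>
definition Tn :: "(nat \<Rightarrow> nat \<Rightarrow> complex) \<Rightarrow> nat \<Rightarrow> (nat \<Rightarrow> complex) \<Rightarrow> nat \<Rightarrow> complex" where
  "Tn u n x = (\<lambda>m. \<Sum>k\<le>n. x (k + n) * u k m)"

definition has_pos_density :: "nat set \<Rightarrow> bool" where
  "has_pos_density A \<longleftrightarrow>
     (\<exists>d>0. (\<lambda>n. real (card (A \<inter> {1..n})) / real n) \<longlonglongrightarrow> d)"

end

theory Submission
  imports Defs
begin

text \<open>
  Write \<open>q = 1 / sqrt \<tau>\<close>.  The log-tail condition gives \<open>P(|X| \<ge> e q ^ k) = O(k powr -(1 + \<beta>))\<close>,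
  which is summable.  Hence, by Borel-Cantelli, \<open>|X k| < q ^ k\<close> eventually, and \<open>\<Sum>k. |X k| \<parallel>u k\<parallel>\<close>
  is dominated by \<open>C (sqrt \<tau>) ^ k\<close>.

  Since \<open>u\<close> is triangular, \<open>h = (\<Sum>k\<le>N. c k * u k)\<close>, and \<open>T n v\<close> is within \<open>\<eta>\<close> of \<open>h\<close> whenever
  \<open>X (k + n)\<close> lies in the ball \<open>B k\<close> of radius \<open>\<epsilon> q ^ k\<close> around \<open>c k\<close> for every \<open>k\<close>.  Call this
  event \<open>G n\<close>.  By independence, \<open>P(G n) = \<Prod>k. P(X \<in> B k)\<close>, which is positive because \<open>X\<close> has full
  support and \<open>\<Sum>k. P(X \<notin> B k) < \<infinity>\<close>.  Moreover \<open>G n\<close> and \<open>G (n + j)\<close> are nearly independent: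
  \<open>|P(G n \<inter> G (n + j)) - P(G 0)\<^sup>2| \<le> \<Sum>i\<ge>j. P(X \<notin> B i) = O(j powr -(\<beta> / 2))\<close>.  A second
  moment bound along the sparse times \<open>(i + 1) ^ (a + 2)\<close> and Borel-Cantelli then show that almost surely the
  frequency of the \<open>G n\<close> converges to \<open>P(G 0) > 0\<close>; monotonicity interpolates between these times.
\<close>

section \<open>The l_p norm\<close>

lemma powr_convex_comb_le:
  fixes x y t p :: real
  assumes p: "1 \<le> p" and "0 \<le> x" "0 \<le> y" "0 \<le> t" "t \<le> 1"
  shows "((1 - t) * x + t * y) powr p \<le> (1 - t) * x powr p + t * y powr p"
proof (cases "x = 0 \<or> y = 0")
  case False
  with assms show ?thesis
    using convex_onD[OF powr_convex[OF p], of t x y] by simp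
next
  case True
  have scaled: "(s * z) powr p \<le> s * z powr p" if "0 \<le> s" "s \<le> 1" "0 \<le> z" for s z :: real
  proof (cases "s = 0")
    case False
    then have "s powr p \<le> s" using that p by (intro powr_le_one_le) auto
    then show ?thesis using that by (simp add: powr_mult mult_right_mono)
  qed simp
  from True show ?thesis
    using assms scaled[of t y] scaled[of "1 - t" x] by auto
qed

lemma lp_norm_nonneg: "0 \<le> lp_norm p x"
  unfolding lp_norm_def by simp

lemma lp_norm_powr:
  assumes "0 < p" "in_lp p x"
  shows "lp_norm p x powr p = (\<Sum>n. norm (x n) powr p)"
  using assms unfolding lp_norm_def in_lp_def by (simp add: powr_powr suminf_nonneg)

lemma lp_norm_eq_0D:
  assumes "0 < p" "in_lp p x" "lp_norm p x = 0"
  shows "x n = 0"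
proof -
  have "(\<Sum>n. norm (x n) powr p) = 0" using lp_norm_powr[OF assms(1,2)] assms by simp
  then show ?thesis
    using assms(2) unfolding in_lp_def by (subst (asm) suminf_eq_zero_iff) auto
qed

lemma c00_imp_in_lp: "c00 x \<Longrightarrow> in_lp p x"
  unfolding c00_def in_lp_def by (rule summable_finite[of "{n. x n \<noteq> 0}"]) auto

lemma
  assumes p: "0 < p" and x: "in_lp p x"
  shows in_lp_mult: "in_lp p (\<lambda>m. a * x m)"
    and lp_norm_mult: "lp_norm p (\<lambda>m. a * x m) = norm a * lp_norm p x"
proof -
  have sx: "summable (\<lambda>m. norm (x m) powr p)" using x unfolding in_lp_def .
  have eq: "norm (a * x m) powr p = norm a powr p * norm (x m) powr p" for m
    by (simp add: norm_mult powr_mult)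
  show "in_lp p (\<lambda>m. a * x m)" unfolding in_lp_def eq by (rule summable_mult[OF sx])
  have "lp_norm p (\<lambda>m. a * x m) = (norm a powr p) powr (1/p) * (\<Sum>m. norm (x m) powr p) powr (1/p)"
    unfolding lp_norm_def eq suminf_mult[OF sx] by (simp add: powr_mult suminf_nonneg sx)
  also have "\<dots> = norm a * lp_norm p x" using p unfolding lp_norm_def by (simp add: powr_powr)
  finally show "lp_norm p (\<lambda>m. a * x m) = norm a * lp_norm p x" .
qed

text \<open>Convexity of \<open>t \<mapsto> t powr p\<close> at the weights \<open>a / (a + b)\<close> and \<open>b / (a + b)\<close>; summed over
  coordinates with \<open>a, b\<close> the norms of \<open>x, y\<close> it gives Minkowski's inequality.\<close>
lemma powr_add_le_weighted:
  fixes u v a b p :: real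
  assumes p: "1 \<le> p" and uv: "0 \<le> u" "0 \<le> v" and ab: "0 < a" "0 < b"
  shows "(u + v) powr p \<le> (a + b) powr (p - 1) * (u powr p / a powr (p - 1) + v powr p / b powr (p - 1))"
proof -
  define t where "t = b / (a + b)"
  have t: "0 \<le> t" "t \<le> 1" and one_minus_t: "1 - t = a / (a + b)"
    using ab unfolding t_def by (auto simp: field_simps)
  have "(1 - t) * (u / a) = u / (a + b)" using ab unfolding one_minus_t by simp
  moreover have "t * (v / b) = v / (a + b)" using ab unfolding t_def by simp
  ultimately have "u + v = (a + b) * ((1 - t) * (u / a) + t * (v / b))"
    using ab by (simp add: add_divide_distrib[symmetric])
  then have "(u + v) powr p = (a + b) powr p * ((1 - t) * (u / a) + t * (v / b)) powr p"
    using ab uv t by (simp add: powr_mult)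
  also have "\<dots> \<le> (a + b) powr p * ((1 - t) * (u / a) powr p + t * (v / b) powr p)"
    using p ab uv t by (intro mult_left_mono powr_convex_comb_le) auto
  also have "\<dots> = (a + b) powr p * (a / (a + b)) * (u / a) powr p + (a + b) powr p * (b / (a + b)) * (v / b) powr p"
    unfolding one_minus_t unfolding t_def by (simp add: distrib_left mult.assoc)
  also have "\<dots> = (a + b) powr (p - 1) * (u powr p / a powr (p - 1) + v powr p / b powr (p - 1))"
  proof -
    have "(a + b) powr p * (c / (a + b)) = (a + b) powr (p - 1) * c" for c
      using ab by (simp add: powr_diff)
    moreover have "c * (w / c) powr p = w powr p / c powr (p - 1)" if "0 < c" for c w
      using that by (simp add: powr_diff powr_divide)
    ultimately show ?thesis using ab by (simp add: distrib_left mult.assoc)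
  qed
  finally show ?thesis .
qed

lemma
  assumes p: "1 \<le> p" and x: "in_lp p x" and y: "in_lp p y"
  shows in_lp_add: "in_lp p (\<lambda>m. x m + y m)"
    and lp_norm_triangle: "lp_norm p (\<lambda>m. x m + y m) \<le> lp_norm p x + lp_norm p y"
proof -
  have p0: "0 < p" using p by simp
  define a b where "a = lp_norm p x" and "b = lp_norm p y"
  have sx: "summable (\<lambda>m. norm (x m) powr p)" and sy: "summable (\<lambda>m. norm (y m) powr p)"
    using x y unfolding in_lp_def .
  have "in_lp p (\<lambda>m. x m + y m) \<and> lp_norm p (\<lambda>m. x m + y m) \<le> a + b"
  proof (cases "a = 0 \<or> b = 0")
    case True
    with lp_norm_eq_0D[OF p0 x] lp_norm_eq_0D[OF p0 y] have "x = (\<lambda>_. 0) \<or> y = (\<lambda>_. 0)"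
      unfolding a_def b_def by fastforce
    with x y show ?thesis unfolding a_def b_def using lp_norm_nonneg by auto
  next
    case False
    then have a: "a > 0" and b: "b > 0" using lp_norm_nonneg unfolding a_def b_def by (auto simp: less_le)
    define R where "R m = (a + b) powr (p - 1) * (norm (x m) powr p / a powr (p - 1)
                                                 + norm (y m) powr p / b powr (p - 1))" for m
    have pointwise: "norm (x m + y m) powr p \<le> R m" for m
    proof -
      have "norm (x m + y m) powr p \<le> (norm (x m) + norm (y m)) powr p"
        using p norm_triangle_ineq by (intro powr_mono2) auto
      also have "\<dots> \<le> R m" unfolding R_def using p a b by (intro powr_add_le_weighted) auto
      finally show ?thesis .
    qed
    have sR: "summable R" unfolding R_def by (intro summable_mult summable_add summable_divide sx sy)
    have sxy: "summable (\<lambda>m. norm (x m + y m) powr p)"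
      by (rule summable_comparison_test[OF _ sR]) (use pointwise in auto)
    have "(\<Sum>m. norm (x m + y m) powr p) \<le> (\<Sum>m. R m)"
      by (intro suminf_le pointwise sxy sR)
    also have "\<dots> = (a + b) powr (p - 1) * (a powr p / a powr (p - 1) + b powr p / b powr (p - 1))"
      unfolding R_def lp_norm_powr[OF p0 x, folded a_def] lp_norm_powr[OF p0 y, folded b_def]
      by (intro sums_unique[symmetric] sums_mult sums_add sums_divide summable_sums sx sy)
    also have "\<dots> = (a + b) powr p" using a b by (simp add: powr_diff)
    finally have "lp_norm p (\<lambda>m. x m + y m) \<le> ((a + b) powr p) powr (1 / p)"
      unfolding lp_norm_def using p by (intro powr_mono2) (auto intro!: suminf_nonneg sxy)
    also have "\<dots> = a + b" using a b p by (simp add: powr_powr)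
    finally show ?thesis using sxy unfolding in_lp_def by simp
  qed
  then show "in_lp p (\<lambda>m. x m + y m)" "lp_norm p (\<lambda>m. x m + y m) \<le> lp_norm p x + lp_norm p y"
    unfolding a_def b_def by auto
qed

lemma lp_norm_sum_le:
  assumes p: "1 \<le> p" and F: "finite F" and v: "\<And>k. k \<in> F \<Longrightarrow> in_lp p (v k)"
  shows "lp_norm p (\<lambda>m. \<Sum>k\<in>F. a k * v k m) \<le> (\<Sum>k\<in>F. norm (a k) * lp_norm p (v k))"
proof -
  have "in_lp p (\<lambda>m. \<Sum>k\<in>F. a k * v k m) \<and>
        lp_norm p (\<lambda>m. \<Sum>k\<in>F. a k * v k m) \<le> (\<Sum>k\<in>F. norm (a k) * lp_norm p (v k))"
    using F v
  proof (induction F rule: finite_induct)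
    case empty
    then show ?case unfolding in_lp_def lp_norm_def by simp
  next
    case (insert k F)
    have vk: "in_lp p (\<lambda>m. a k * v k m)" and nk: "lp_norm p (\<lambda>m. a k * v k m) = norm (a k) * lp_norm p (v k)"
      using p insert.prems in_lp_mult lp_norm_mult by auto
    with insert p in_lp_add[OF p vk] lp_norm_triangle[OF p vk] show ?case by fastforce
  qed
  then show ?thesis ..
qed

section \<open>Admissible sequences\<close>

lemma
  assumes adm: "admissible p u"
  shows admissible_diag_nonzero: "u k k \<noteq> 0"
    and admissible_upper_zero: "k < m \<Longrightarrow> u k m = 0"
proof -
  have "u k k \<noteq> 0 \<and> (\<forall>m>k. u k m = 0)"
  proof (cases "k = 0")
    case True
    moreover have "u 0 = unit_vec 0" using adm unfolding admissible_def by blast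
    ultimately show ?thesis by (simp add: unit_vec_def)
  next
    case False
    have fin: "finite {n. u k n \<noteq> 0}" using adm unfolding admissible_def c00_def by blast
    have "\<forall>k\<ge>1. u k \<noteq> (\<lambda>_. 0) \<and> deg (u k) = k" using adm unfolding admissible_def by blast
    with False have ne: "{n. u k n \<noteq> 0} \<noteq> {}" and deg: "Max {n. u k n \<noteq> 0} = k"
      unfolding deg_def by (auto simp: fun_eq_iff)
    show ?thesis using Max_in[OF fin ne] Max_ge[OF fin] deg by fastforce
  qed
  then show "u k k \<noteq> 0" "k < m \<Longrightarrow> u k m = 0" by auto
qed

lemma admissible_span:
  assumes adm: "admissible p u" and x: "\<And>m. N < m \<Longrightarrow> x m = 0"
  shows "\<exists>c. \<forall>m. x m = (\<Sum>k\<le>N. c k * u k m)"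
  using x
proof (induction N arbitrary: x)
  case 0
  have "u 0 = unit_vec 0" using adm unfolding admissible_def by blast
  then have "x m = (\<Sum>k\<le>0. x 0 * u k m)" for m
    using "0.prems"[of m] by (cases "m = 0") (simp_all add: unit_vec_def)
  then show ?case by (intro exI[of _ "\<lambda>_. x 0"] allI)
next
  case (Suc N)
  define a where "a = x (Suc N) / u (Suc N) (Suc N)"
  have "x m - a * u (Suc N) m = 0" if "N < m" for m
  proof (cases "m = Suc N")
    case True
    then show ?thesis using admissible_diag_nonzero[OF adm, of "Suc N"] by (simp add: a_def)
  next
    case False
    then show ?thesis using that Suc.prems[of m] admissible_upper_zero[OF adm, of "Suc N" m] by simp
  qed
  then obtain c where c: "\<And>m. x m - a * u (Suc N) m = (\<Sum>k\<le>N. c k * u k m)"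
    using Suc.IH[of "\<lambda>m. x m - a * u (Suc N) m"] by blast
  have "x m = (\<Sum>k\<le>Suc N. (c(Suc N := a)) k * u k m)" for m
  proof -
    have "(\<Sum>k\<le>N. (c(Suc N := a)) k * u k m) = (\<Sum>k\<le>N. c k * u k m)"
      by (intro sum.cong) auto
    then show ?thesis using c[of m] by (simp add: diff_eq_eq)
  qed
  then show ?case by blast
qed

lemma c00_expansion:
  assumes adm: "admissible p u" and h: "c00 h"
  obtains N c where "\<And>k. N < k \<Longrightarrow> c k = 0" and "\<And>n m. N \<le> n \<Longrightarrow> h m = (\<Sum>k\<le>n. c k * u k m)"
proof -
  obtain N where "\<forall>n\<in>{n. h n \<noteq> 0}. n \<le> N"
    using h unfolding c00_def finite_nat_set_iff_bounded_le by blast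
  then have "\<And>m. N < m \<Longrightarrow> h m = 0" by force
  then obtain c where c: "\<And>m. h m = (\<Sum>k\<le>N. c k * u k m)"
    using admissible_span[OF adm, of N h] by blast
  define c' where "c' k = (if k \<le> N then c k else 0)" for k
  have "h m = (\<Sum>k\<le>n. c' k * u k m)" if "N \<le> n" for n m
  proof -
    have "(\<Sum>k\<le>n. c' k * u k m) = (\<Sum>k\<le>N. c' k * u k m)"
      using that by (intro sum.mono_neutral_right) (auto simp: c'_def)
    then show ?thesis by (simp add: c c'_def)
  qed
  then show ?thesis using that[of N c'] by (simp add: c'_def)
qed

lemma lp_norm_Tn_diff_le:
  assumes p: "1 \<le> p" and adm: "admissible p u"
    and h: "\<And>m. h m = (\<Sum>k\<le>n. c k * u k m)"
    and w: "\<And>k. k \<le> n \<Longrightarrow> norm (x (k + n) - c k) \<le> w k"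
  shows "lp_norm p (\<lambda>m. Tn u n x m - h m) \<le> (\<Sum>k\<le>n. w k * lp_norm p (u k))"
proof -
  have "(\<lambda>m. Tn u n x m - h m) = (\<lambda>m. \<Sum>k\<le>n. (x (k + n) - c k) * u k m)"
    unfolding Tn_def h by (simp add: sum_subtractf left_diff_distrib)
  moreover have "in_lp p (u k)" for k
    using adm c00_imp_in_lp unfolding admissible_def by blast
  ultimately have "lp_norm p (\<lambda>m. Tn u n x m - h m) \<le> (\<Sum>k\<le>n. norm (x (k + n) - c k) * lp_norm p (u k))"
    using lp_norm_sum_le[OF p, of "{..n}" u "\<lambda>k. x (k + n) - c k"] by simp
  also have "\<dots> \<le> (\<Sum>k\<le>n. w k * lp_norm p (u k))"
    using w by (intro sum_mono mult_right_mono lp_norm_nonneg) auto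
  finally show ?thesis .
qed

section \<open>Infinite products\<close>

lemma prod_lessThan_add:
  fixes f :: "nat \<Rightarrow> 'b::comm_monoid_mult"
  shows "(\<Prod>k<j + L. f k) = (\<Prod>k<j. f k) * (\<Prod>i<L. f (j + i))"
  by (induction L) (auto simp: mult.assoc)

lemma prod_minus_sum_le_prod:
  fixes x y d :: "nat \<Rightarrow> real"
  assumes "\<And>i. 0 \<le> x i" "\<And>i. x i \<le> 1" "\<And>i. 0 \<le> y i" "\<And>i. y i \<le> 1" "\<And>i. 0 \<le> d i"
    and "\<And>i. y i - d i \<le> x i"
  shows "(\<Prod>i<n. y i) - (\<Sum>i<n. d i) \<le> (\<Prod>i<n. x i)"
proof (induction n)
  case (Suc n)
  define X Y S where "X = (\<Prod>i<n. x i)" and "Y = (\<Prod>i<n. y i)" and "S = (\<Sum>i<n. d i)"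
  have X: "0 \<le> X" "X \<le> 1" and Y: "0 \<le> Y" and S: "0 \<le> S"
    unfolding X_def Y_def S_def using assms by (auto intro: prod_nonneg prod_le_1 sum_nonneg)
  have "Y * y n - (S + d n) \<le> (Y - S) * y n - d n"
    using S assms(4)[of n] by (simp add: algebra_simps mult_left_le)
  also have "\<dots> \<le> X * y n - d n"
    using Suc.IH assms(3)[of n] unfolding X_def Y_def S_def by (simp add: mult_right_mono)
  also have "\<dots> \<le> X * (y n - d n)"
    using X assms(5)[of n] by (simp add: algebra_simps mult_left_le_one_le)
  also have "\<dots> \<le> X * x n"
    using X assms(6)[of n] by (simp add: mult_left_mono)
  finally show ?case unfolding X_def Y_def S_def by (simp add: mult.commute)
qed simp

lemma
  fixes a :: "nat \<Rightarrow> real"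
  assumes a: "\<And>k. 0 \<le> a k" "\<And>k. a k \<le> 1" and q: "summable (\<lambda>k. 1 - a k)"
    and P: "(\<lambda>N. \<Prod>k<N. a k) \<longlonglongrightarrow> c"
  shows lim_prod_ge: "(\<Prod>k<j. a k) * (1 - (\<Sum>i. 1 - a (i + j))) \<le> c"
    and lim_prod_le: "c \<le> (\<Prod>k<j. a k)"
proof -
  have PL: "(\<lambda>L. (\<Prod>k<j. a k) * (\<Prod>i<L. a (j + i))) \<longlonglongrightarrow> c"
    using LIMSEQ_ignore_initial_segment[OF P, where k=j]
    by (simp only: add.commute[of _ j] prod_lessThan_add)
  have Pj: "0 \<le> (\<Prod>k<j. a k)" using a by (simp add: prod_nonneg)
  have "1 - (\<Sum>i. 1 - a (i + j)) \<le> (\<Prod>i<L. a (j + i))" for L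
  proof -
    have "(\<Sum>i<L. 1 - a (i + j)) \<le> (\<Sum>i. 1 - a (i + j))"
      using a by (intro sum_le_suminf summable_ignore_initial_segment q) auto
    moreover have "(\<Prod>i<L. 1) - (\<Sum>i<L. 1 - a (j + i)) \<le> (\<Prod>i<L. a (j + i))"
      using a by (intro prod_minus_sum_le_prod) auto
    ultimately show ?thesis by (simp add: add.commute)
  qed
  then show "(\<Prod>k<j. a k) * (1 - (\<Sum>i. 1 - a (i + j))) \<le> c"
    using Pj by (intro LIMSEQ_le_const[OF PL]) (auto intro: mult_left_mono)
  show "c \<le> (\<Prod>k<j. a k)"
    using Pj a by (intro LIMSEQ_le_const2[OF PL]) (auto intro!: mult_left_le prod_le_1 prod_nonneg)
qed

text \<open>Covariance estimate for two shifted product events: \<open>a k\<close> is the probability of the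
  \<open>k\<close>-th factor, and \<open>b k\<close> that of the intersection of the \<open>k\<close>-th and \<open>(k - j)\<close>-th factors.\<close>
lemma lim_prod_overlap_bound:
  fixes a b :: "nat \<Rightarrow> real"
  assumes a: "\<And>k. 0 \<le> a k" "\<And>k. a k \<le> 1" and b: "\<And>k. 0 \<le> b k" "\<And>k. b k \<le> 1"
    and q: "summable (\<lambda>k. 1 - a k)"
    and b_init: "\<And>k. k < j \<Longrightarrow> b k = a k"
    and b_le: "\<And>k. j \<le> k \<Longrightarrow> b k \<le> a (k - j)"
    and b_ge: "\<And>k. j \<le> k \<Longrightarrow> a (k - j) - (1 - a k) \<le> b k"
    and P: "(\<lambda>N. \<Prod>k<N. a k) \<longlonglongrightarrow> c" and Q: "(\<lambda>N. \<Prod>k<N. b k) \<longlonglongrightarrow> c'"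
  shows "\<bar>c' - c\<^sup>2\<bar> \<le> (\<Sum>i. 1 - a (i + j))"
proof -
  define \<rho> Pj where "\<rho> = (\<Sum>i. 1 - a (i + j))" and "Pj = (\<Prod>k<j. a k)"
  have tail_le: "(\<Sum>i<L. 1 - a (j + i)) \<le> \<rho>" for L
    unfolding \<rho>_def using a
    by (subst add.commute) (intro sum_le_suminf summable_ignore_initial_segment q; simp)
  have \<rho>: "0 \<le> \<rho>" using tail_le[of 0] by simp
  have Pj: "0 \<le> Pj" "Pj \<le> 1" unfolding Pj_def using a by (auto intro: prod_nonneg prod_le_1)
  have c_ge: "Pj * (1 - \<rho>) \<le> c" and c_le: "c \<le> Pj"
    unfolding \<rho>_def Pj_def using lim_prod_ge[OF a q P] lim_prod_le[OF a q P] by auto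
  have c: "0 \<le> c" using a by (intro LIMSEQ_le_const[OF P]) (auto intro: prod_nonneg)
  have QL: "(\<lambda>L. Pj * (\<Prod>i<L. b (j + i))) \<longlonglongrightarrow> c'"
    using LIMSEQ_ignore_initial_segment[OF Q, where k=j] b_init
    by (simp only: add.commute[of _ j] prod_lessThan_add Pj_def) simp
  have "c' \<le> Pj * c"
  proof (rule LIMSEQ_le[OF QL tendsto_mult_left[OF P]], intro exI allI impI)
    fix L
    have "(\<Prod>i<L. b (j + i)) \<le> (\<Prod>i<L. a i)"
      using b b_le[of "j + _"] by (intro prod_mono) auto
    then show "Pj * (\<Prod>i<L. b (j + i)) \<le> Pj * (\<Prod>i<L. a i)" using Pj by (simp add: mult_left_mono)
  qed
  moreover have "(\<lambda>L. Pj * ((\<Prod>i<L. a i) - \<rho>)) \<longlonglongrightarrow> Pj * (c - \<rho>)"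
    by (intro tendsto_intros P)
  then have "Pj * (c - \<rho>) \<le> c'"
  proof (rule LIMSEQ_le[OF _ QL], intro exI allI impI)
    fix L
    have "(\<Prod>i<L. a i) - (\<Sum>i<L. 1 - a (j + i)) \<le> (\<Prod>i<L. b (j + i))"
      using a b b_ge[of "j + _"] by (intro prod_minus_sum_le_prod) auto
    then show "Pj * ((\<Prod>i<L. a i) - \<rho>) \<le> Pj * (\<Prod>i<L. b (j + i))"
      using Pj tail_le[of L] by (intro mult_left_mono) auto
  qed
  moreover have "c * (Pj - c) \<le> Pj * \<rho>"
  proof -
    have "c * (Pj - c) \<le> Pj - c" using c c_le Pj by (intro mult_left_le_one_le) auto
    also have "\<dots> \<le> Pj * \<rho>" using c_ge by (simp add: algebra_simps)
    finally show ?thesis .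
  qed
  moreover have "0 \<le> c * (Pj - c)" using c c_le by simp
  moreover have "Pj * \<rho> \<le> \<rho>" using Pj \<rho> by (simp add: mult_left_le_one_le)
  ultimately show ?thesis unfolding \<rho>_def[symmetric] by (auto simp: abs_le_iff power2_eq_square algebra_simps)
qed

lemma LIMSEQ_prod_pos:
  fixes a :: "nat \<Rightarrow> real"
  assumes a: "\<And>k. 0 < a k" "\<And>k. a k \<le> 1" and q: "summable (\<lambda>k. 1 - a k)"
    and P: "(\<lambda>N. \<Prod>k<N. a k) \<longlonglongrightarrow> c"
  shows "0 < c"
proof -
  have "\<bar>a k - 1\<bar> = 1 - a k" and "a k - 1 \<noteq> -1" for k
    using a[of k] by auto
  then have "convergent_prod (\<lambda>k. 1 + (a k - 1))"
    using q by (intro summable_imp_convergent_prod_real) auto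
  then have conv: "convergent_prod a" by simp
  have "(\<lambda>N. \<Prod>k<Suc N. a k) \<longlonglongrightarrow> prodinf a"
    using convergent_prod_LIMSEQ[OF conv] by (simp add: lessThan_Suc_atMost)
  then have "c = prodinf a" by (rule LIMSEQ_unique[OF LIMSEQ_Suc[OF P]])
  moreover have "prodinf a \<noteq> 0" using prodinf_nonzero[OF conv] a by (metis less_irrefl)
  moreover have "0 \<le> c" using a by (intro LIMSEQ_le_const[OF P]) (auto intro: prod_nonneg less_imp_le)
  ultimately show ?thesis by simp
qed

section \<open>Averages, densities and tail sums\<close>

lemma strict_mono_bracket:
  fixes Mi :: "nat \<Rightarrow> nat"
  assumes Mi: "strict_mono Mi" and n: "Mi I \<le> n"
  obtains i where "I \<le> i" "Mi i \<le> n" "n < Mi (Suc i)"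
proof -
  define i where "i = Max {i. Mi i \<le> n}"
  have "{i. Mi i \<le> n} \<subseteq> {..n}" using seq_suble[OF Mi] order.trans by auto
  then have fin: "finite {i. Mi i \<le> n}" by (rule finite_subset) simp
  have "I \<le> i" "Mi i \<le> n" using Max_ge[OF fin] Max_in[OF fin] n unfolding i_def by auto
  moreover have "n < Mi (Suc i)"
  proof (rule ccontr)
    assume "\<not> n < Mi (Suc i)"
    then have "Suc i \<le> i" using Max_ge[OF fin, of "Suc i"] unfolding i_def by simp
    then show False by simp
  qed
  ultimately show ?thesis by (rule that)
qed

text \<open>Sandwich \<open>S n / n\<close> between \<open>S (Mi i) / Mi (i + 1)\<close> and \<open>S (Mi (i + 1)) / Mi i\<close>
  for \<open>Mi i \<le> n < Mi (i + 1)\<close>.\<close>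
lemma LIMSEQ_average_of_subseq:
  fixes S :: "nat \<Rightarrow> real" and Mi :: "nat \<Rightarrow> nat"
  assumes S: "\<And>n. 0 \<le> S n" "mono S" and Mi: "strict_mono Mi" "0 < Mi 0"
    and ratio: "(\<lambda>i. real (Mi (Suc i)) / real (Mi i)) \<longlonglongrightarrow> 1"
    and sub: "(\<lambda>i. S (Mi i) / real (Mi i)) \<longlonglongrightarrow> c"
  shows "(\<lambda>n. S n / real n) \<longlonglongrightarrow> c"
proof (rule tendstoI)
  fix \<epsilon> :: real assume "0 < \<epsilon>"
  have pos: "0 < real (Mi i)" for i using Mi seq_suble[OF Mi(1), of i] strict_mono_less_eq[OF Mi(1), of 0 i] by simp
  have "(\<lambda>i. S (Mi i) / real (Mi i) / (real (Mi (Suc i)) / real (Mi i))) \<longlonglongrightarrow> c / 1"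
    and "(\<lambda>i. S (Mi (Suc i)) / real (Mi (Suc i)) * (real (Mi (Suc i)) / real (Mi i))) \<longlonglongrightarrow> c * 1"
    by (intro tendsto_intros sub ratio LIMSEQ_Suc[OF sub]; simp)+
  moreover have "S (Mi i) / real (Mi i) / (real (Mi (Suc i)) / real (Mi i)) = S (Mi i) / real (Mi (Suc i))"
    and "S (Mi (Suc i)) / real (Mi (Suc i)) * (real (Mi (Suc i)) / real (Mi i)) = S (Mi (Suc i)) / real (Mi i)"
    for i using pos[of i] pos[of "Suc i"] by simp_all
  ultimately have "(\<lambda>i. S (Mi i) / real (Mi (Suc i))) \<longlonglongrightarrow> c" and "(\<lambda>i. S (Mi (Suc i)) / real (Mi i)) \<longlonglongrightarrow> c"
    by (simp_all only: mult_1_right div_by_1)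
  then have "eventually (\<lambda>i. c - \<epsilon> < S (Mi i) / real (Mi (Suc i))
                           \<and> S (Mi (Suc i)) / real (Mi i) < c + \<epsilon>) sequentially"
    using \<open>0 < \<epsilon>\<close> by (intro eventually_conj order_tendstoD) auto
  then obtain I where I: "\<And>i. I \<le> i \<Longrightarrow> c - \<epsilon> < S (Mi i) / real (Mi (Suc i))
                                    \<and> S (Mi (Suc i)) / real (Mi i) < c + \<epsilon>"
    unfolding eventually_sequentially by blast
  show "eventually (\<lambda>n. dist (S n / real n) c < \<epsilon>) sequentially"
    unfolding eventually_sequentially
  proof (intro exI allI impI)
    fix n assume "Mi I \<le> n"
    then obtain i where i: "I \<le> i" "Mi i \<le> n" "n < Mi (Suc i)" using strict_mono_bracket[OF Mi(1)] by blast
    have n: "0 < real n" using pos[of i] i by simp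
    have "S (Mi i) / real (Mi (Suc i)) \<le> S n / real n"
      using i n S pos monoD[OF S(2), of "Mi i" n] by (intro frac_le) auto
    moreover have "S n / real n \<le> S (Mi (Suc i)) / real (Mi i)"
      using i n S pos monoD[OF S(2), of n "Mi (Suc i)"] by (intro frac_le) auto
    ultimately show "dist (S n / real n) c < \<epsilon>" using I[OF i(1)] by (simp add: dist_real_def abs_less_iff)
  qed
qed

lemma LIMSEQ_I_inverse_Suc:
  fixes f :: "nat \<Rightarrow> real"
  assumes "\<And>m. eventually (\<lambda>i. \<bar>f i - c\<bar> < 1 / real (Suc m)) sequentially"
  shows "f \<longlonglongrightarrow> c"
proof (rule tendstoI)
  fix r :: real assume "0 < r"
  then obtain m where "0 < m" "inverse (real m) < r" using ex_inverse_of_nat_less by blast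
  moreover have "1 / real (Suc m) < inverse (real m)"
    using \<open>0 < m\<close> by (simp add: divide_inverse less_imp_inverse_less)
  ultimately have "1 / real (Suc m) < r" by linarith
  then show "eventually (\<lambda>i. dist (f i) c < r) sequentially"
    using assms[of m] by (auto elim!: eventually_mono simp: dist_real_def)
qed

lemma double_sum_near_far_le:
  fixes r :: "nat \<Rightarrow> nat \<Rightarrow> real"
  assumes near: "\<And>n n'. r n n' \<le> 1"
    and far: "\<And>n n'. n + L \<le> n' \<or> n' + L \<le> n \<Longrightarrow> r n n' \<le> \<epsilon>" and "0 \<le> \<epsilon>"
  shows "(\<Sum>n\<in>{1..N}. \<Sum>n'\<in>{1..N}. r n n') \<le> real N * (2 * real L) + real N * (real N * \<epsilon>)"
proof -
  have row: "(\<Sum>n'\<in>{1..N}. r n n') \<le> 2 * real L + real N * \<epsilon>" for n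
  proof -
    have "(\<Sum>n'\<in>{1..N}. r n n') \<le> (\<Sum>n'\<in>{1..N}. (if n' \<in> {n - L<..<n + L} then 1 else 0) + \<epsilon>)"
    proof (intro sum_mono)
      fix n' assume "n' \<in> {1..N}"
      then have "n' \<notin> {n - L<..<n + L} \<Longrightarrow> n + L \<le> n' \<or> n' + L \<le> n" by auto
      then show "r n n' \<le> (if n' \<in> {n - L<..<n + L} then 1 else 0) + \<epsilon>"
        using near[of n n'] far[of n n'] \<open>0 \<le> \<epsilon>\<close> by (cases "n' \<in> {n - L<..<n + L}") auto
    qed
    also have "\<dots> = real (card ({1..N} \<inter> {n - L<..<n + L})) + real N * \<epsilon>"
      by (simp only: sum.distrib sum.inter_restrict[symmetric] finite_atLeastAtMost) simp
    also have "card ({1..N} \<inter> {n - L<..<n + L}) \<le> 2 * L"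
      using card_mono[of "{n - L<..<n + L}" "{1..N} \<inter> {n - L<..<n + L}"] by simp
    finally show ?thesis by simp
  qed
  have "(\<Sum>n\<in>{1..N}. \<Sum>n'\<in>{1..N}. r n n') \<le> (\<Sum>n\<in>{1..N}. 2 * real L + real N * \<epsilon>)"
    by (intro sum_mono row)
  then show ?thesis by (simp add: algebra_simps)
qed

lemma Limsup_less_PInf_imp_eventually_le:
  assumes "Limsup F (\<lambda>x. ereal (f x)) < \<infinity>"
  shows "\<exists>K\<ge>0. eventually (\<lambda>x. f x \<le> K) F"
proof -
  obtain n :: nat where "Limsup F (\<lambda>x. ereal (f x)) < ereal (real n)"
    using assms less_PInf_Ex_of_nat by (metis less_imp_neq)
  then have "eventually (\<lambda>x. ereal (f x) < ereal (real n)) F" by (rule Limsup_lessD)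
  then have "eventually (\<lambda>x. f x \<le> real n) F" by (rule eventually_mono) simp
  then show ?thesis by (intro exI[of _ "real n"]) simp
qed

text \<open>Along \<open>r = e q ^ k\<close> we eventually have \<open>ln r \<ge> k ln q / 2\<close>.\<close>
lemma log_tail_geometric_bound:
  fixes F :: "real \<Rightarrow> real" and e q \<beta> K0 :: real
  assumes F: "\<And>r. 0 \<le> F r" and \<beta>: "0 < \<beta>" and K0: "0 \<le> K0"
    and tail: "eventually (\<lambda>r. ln r powr (1 + \<beta>) * F r \<le> K0) at_top"
    and e: "0 < e" and q: "1 < q"
  shows "\<exists>K\<ge>0. eventually (\<lambda>k. F (e * q ^ k) \<le> K * real k powr - (1 + \<beta>)) sequentially"
proof -
  obtain r1 where r1: "\<And>r. r1 \<le> r \<Longrightarrow> ln r powr (1 + \<beta>) * F r \<le> K0"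
    using tail unfolding eventually_at_top_linorder by blast
  define r0 where "r0 = max 1 r1"
  have r0: "1 \<le> r0" and T: "\<And>r. r0 \<le> r \<Longrightarrow> ln r powr (1 + \<beta>) * F r \<le> K0"
    using r1 unfolding r0_def by auto
  define lq where "lq = ln q"
  have lq: "0 < lq" unfolding lq_def using q by simp
  obtain k0 :: nat where k0: "2 * (\<bar>ln e\<bar> + ln r0) / lq < real k0" using reals_Archimedean2 by blast
  define K where "K = K0 * (lq / 2) powr - (1 + \<beta>)"
  have "F (e * q ^ k) \<le> K * real k powr - (1 + \<beta>)" if "k0 \<le> k" for k
  proof -
    define w a where "w = e * q ^ k" and "a = real k * lq / 2"
    have "2 * (\<bar>ln e\<bar> + ln r0) < real k0 * lq" using k0 lq by (simp add: divide_less_eq)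
    also have "\<dots> \<le> 2 * a" unfolding a_def using that lq by (simp add: mult_right_mono)
    finally have "2 * (\<bar>ln e\<bar> + ln r0) < 2 * a" .
    moreover have "ln w = ln e + 2 * a" using e q unfolding w_def a_def lq_def by (simp add: ln_mult ln_realpow)
    moreover have "0 \<le> ln r0" using r0 by simp
    ultimately have a: "0 < a" "a \<le> ln w" and "ln r0 \<le> ln w" by auto
    then have "r0 \<le> w" using r0 e q unfolding w_def by simp
    have "F w * a powr (1 + \<beta>) \<le> F w * ln w powr (1 + \<beta>)"
      using a \<beta> F by (intro mult_left_mono powr_mono2) auto
    also have "\<dots> \<le> K0" using T[OF \<open>r0 \<le> w\<close>] by (simp add: mult.commute)
    finally have "F w \<le> K0 / a powr (1 + \<beta>)" using a by (simp add: pos_le_divide_eq)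
    also have "\<dots> = K * real k powr - (1 + \<beta>)"
    proof -
      have "a powr (1 + \<beta>) = real k powr (1 + \<beta>) * (lq / 2) powr (1 + \<beta>)"
        unfolding a_def by (subst powr_mult[symmetric]) (simp_all add: mult.assoc)
      then show ?thesis unfolding K_def powr_minus by (simp add: field_simps)
    qed
    finally show ?thesis unfolding w_def .
  qed
  moreover have "0 \<le> K" unfolding K_def using K0 by simp
  ultimately show ?thesis by (intro exI[of _ K] conjI eventually_sequentiallyI[of k0])
qed

lemma
  fixes q :: "nat \<Rightarrow> real"
  assumes q: "\<And>k. 0 \<le> q k" and \<beta>: "0 < \<beta>"
    and bound: "eventually (\<lambda>k. q k \<le> K * real k powr - (1 + \<beta>)) sequentially"
  shows summable_of_powr_bound: "summable q"
    and tail_suminf_powr_bound: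
      "\<exists>K'. eventually (\<lambda>j. (\<Sum>i. q (i + j)) \<le> K' * real j powr - (\<beta> / 2)) sequentially"
proof -
  obtain k1 where k1: "1 \<le> k1" and qk: "\<And>k. k1 \<le> k \<Longrightarrow> q k \<le> K * real k powr - (1 + \<beta>)"
    using bound unfolding eventually_sequentially by (metis max.bounded_iff max.cobounded1)
  have "0 \<le> K * real k1 powr - (1 + \<beta>)" using q[of k1] qk[of k1] by simp
  then have K: "0 \<le> K" using k1 by (simp add: zero_le_mult_iff)
  have summable_powr: "summable (\<lambda>k. real k powr - (1 + \<gamma>))" if "0 < \<gamma>" for \<gamma>
    using that by (subst summable_real_powr_iff) simp
  show sq: "summable q"
    using q qk by (intro summable_comparison_test'[OF summable_mult[OF summable_powr[OF \<beta>]], of k1]) auto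
  define \<gamma> where "\<gamma> = \<beta> / 2"
  have \<gamma>: "0 < \<gamma>" unfolding \<gamma>_def using \<beta> by simp
  define Z where "Z = (\<Sum>k. real k powr - (1 + \<gamma>))"
  have "(\<Sum>i. q (i + j)) \<le> K * Z * real j powr - \<gamma>" if j: "k1 \<le> j" for j
  proof -
    have pointwise: "q (i + j) \<le> K * real j powr - \<gamma> * real (i + j) powr - (1 + \<gamma>)" for i
    proof -
      have "real (i + j) powr - (1 + \<beta>) = real (i + j) powr (- \<gamma> + - (1 + \<gamma>))"
        unfolding \<gamma>_def by (rule arg_cong[of _ _ "\<lambda>t. real (i + j) powr t"]) simp
      then have "q (i + j) \<le> K * (real (i + j) powr - \<gamma> * real (i + j) powr - (1 + \<gamma>))"
        using qk[of "i + j"] j by (simp only: powr_add)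
      also have "\<dots> \<le> K * (real j powr - \<gamma> * real (i + j) powr - (1 + \<gamma>))"
        using K j k1 \<gamma> by (intro mult_left_mono mult_right_mono powr_mono2') auto
      finally show ?thesis by (simp add: mult_ac)
    qed
    have sj: "summable (\<lambda>i. real (i + j) powr - (1 + \<gamma>))"
      using summable_ignore_initial_segment[OF summable_powr[OF \<gamma>]] .
    have "(\<Sum>i. q (i + j)) \<le> (\<Sum>i. K * real j powr - \<gamma> * real (i + j) powr - (1 + \<gamma>))"
      using pointwise summable_ignore_initial_segment[OF sq] sj by (intro suminf_le summable_mult) auto
    also have "\<dots> = K * real j powr - \<gamma> * (\<Sum>i. real (i + j) powr - (1 + \<gamma>))"
      using sj by (rule suminf_mult)
    also have "\<dots> \<le> K * real j powr - \<gamma> * Z"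
    proof (intro mult_left_mono)
      show "(\<Sum>i. real (i + j) powr - (1 + \<gamma>)) \<le> Z"
        unfolding Z_def using summable_powr[OF \<gamma>]
        by (subst suminf_split_initial_segment[of _ j]) (auto intro!: sum_nonneg)
    qed (use K in simp)
    finally show ?thesis by (simp add: mult_ac)
  qed
  then show "\<exists>K'. eventually (\<lambda>j. (\<Sum>i. q (i + j)) \<le> K' * real j powr - (\<beta> / 2)) sequentially"
    unfolding \<gamma>_def by (intro exI[of _ "K * Z"] eventually_sequentiallyI[of k1])
qed

lemma has_pos_density_of_frequency:
  assumes lim: "(\<lambda>N. real (card {n \<in> {1..N}. P n}) / real N) \<longlonglongrightarrow> c" and c: "0 < c"
  shows "has_pos_density {n. n0 \<le> n \<and> P n}"
proof -
  let ?A = "{n. n0 \<le> n \<and> P n}"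
  have upper: "card (?A \<inter> {1..N}) \<le> card {n \<in> {1..N}. P n}" for N
    by (intro card_mono) auto
  have lower: "card {n \<in> {1..N}. P n} \<le> card (?A \<inter> {1..N}) + n0" for N
  proof -
    have "card {n \<in> {1..N}. P n} \<le> card ((?A \<inter> {1..N}) \<union> {..<n0})" by (intro card_mono) auto
    also have "\<dots> \<le> card (?A \<inter> {1..N}) + n0" using card_Un_le[of _ "{..<n0}"] by simp
    finally show ?thesis .
  qed
  have "real (card {n \<in> {1..N}. P n}) \<le> real (card (?A \<inter> {1..N})) + real n0"
    and "real (card (?A \<inter> {1..N})) \<le> real (card {n \<in> {1..N}. P n})" for N
    using lower[of N] upper[of N] by (simp_all only: of_nat_add[symmetric] of_nat_le_iff)
  then have "real (card {n \<in> {1..N}. P n}) - real n0 \<le> real (card (?A \<inter> {1..N}))"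
    and "real (card (?A \<inter> {1..N})) \<le> real (card {n \<in> {1..N}. P n})" for N
    by (auto simp: algebra_simps)
  then have "eventually (\<lambda>N. real (card {n \<in> {1..N}. P n}) / real N - real n0 / real N
                                 \<le> real (card (?A \<inter> {1..N})) / real N) sequentially"
    and "eventually (\<lambda>N. real (card (?A \<inter> {1..N})) / real N
                          \<le> real (card {n \<in> {1..N}. P n}) / real N) sequentially"
    by (auto intro!: always_eventually divide_right_mono simp: diff_divide_distrib[symmetric])
  moreover have "(\<lambda>N. real (card {n \<in> {1..N}. P n}) / real N - real n0 / real N) \<longlonglongrightarrow> c"
    using tendsto_diff[OF lim lim_const_over_n[of "real n0"]] by simp
  ultimately have "(\<lambda>N. real (card (?A \<inter> {1..N})) / real N) \<longlonglongrightarrow> c"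
    using lim by (rule tendsto_sandwich)
  then show ?thesis unfolding has_pos_density_def using c by (intro exI[of _ c]) simp
qed

section \<open>Frequencies of weakly correlated events\<close>

lemma card_Collect_mem_eq_sum_indicator:
  assumes "finite I"
  shows "real (card {n \<in> I. \<omega> \<in> G n}) = (\<Sum>n\<in>I. indicator (G n) \<omega>)"
  unfolding indicator_def of_bool_def sum.inter_filter[symmetric, OF assms] by simp

lemma (in prob_space)
  fixes A B :: "'a set" and c :: real
  assumes [measurable]: "A \<in> events" "B \<in> events" and "prob A = c" "prob B = c"
  shows integrable_centered_indicator_mult:
      "integrable M (\<lambda>\<omega>. (indicator A \<omega> - c) * (indicator B \<omega> - c) :: real)"
    and expectation_centered_indicator_mult:
      "expectation (\<lambda>\<omega>. (indicator A \<omega> - c) * (indicator B \<omega> - c) :: real) = prob (A \<inter> B) - c\<^sup>2"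
proof -
  have eq: "(\<lambda>\<omega>. (indicator A \<omega> - c) * (indicator B \<omega> - c) :: real)
      = (\<lambda>\<omega>. indicator (A \<inter> B) \<omega> - c * indicator A \<omega> - c * indicator B \<omega> + c\<^sup>2)"
    by (auto simp: indicator_def power2_eq_square algebra_simps)
  have [simp]: "integrable M (indicator S :: 'a \<Rightarrow> real)" if "S \<in> events" for S
    using that by (intro integrable_real_indicator) (auto simp: less_top[symmetric])
  show "integrable M (\<lambda>\<omega>. (indicator A \<omega> - c) * (indicator B \<omega> - c) :: real)"
    unfolding eq by simp
  show "expectation (\<lambda>\<omega>. (indicator A \<omega> - c) * (indicator B \<omega> - c) :: real) = prob (A \<inter> B) - c\<^sup>2"
    unfolding eq using assms by (simp add: prob_space power2_eq_square)
qed

lemma (in prob_space) prob_centered_count_ge_le: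
  fixes G :: "nat \<Rightarrow> 'a set" and c e :: real
  assumes [measurable]: "\<And>n. G n \<in> events" and prob_G: "\<And>n. prob (G n) = c" and "0 < e"
  shows "prob {\<omega> \<in> space M. e \<le> \<bar>\<Sum>n\<in>I. indicator (G n) \<omega> - c\<bar>}
           \<le> (\<Sum>n\<in>I. \<Sum>n'\<in>I. prob (G n \<inter> G n') - c\<^sup>2) / e\<^sup>2"
proof -
  define D where "D \<omega> = (\<Sum>n\<in>I. indicator (G n) \<omega> - c :: real)" for \<omega>
  have sq: "(\<lambda>\<omega>. (D \<omega>)\<^sup>2) = (\<lambda>\<omega>. \<Sum>n\<in>I. \<Sum>n'\<in>I. (indicator (G n) \<omega> - c) * (indicator (G n') \<omega> - c))"
    unfolding D_def power2_eq_square sum_product ..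
  have int: "integrable M (\<lambda>\<omega>. (D \<omega>)\<^sup>2)"
    unfolding sq using prob_G
    by (intro Bochner_Integration.integrable_sum integrable_centered_indicator_mult) auto
  have "prob {\<omega> \<in> space M. e \<le> \<bar>D \<omega>\<bar>} \<le> prob {\<omega> \<in> space M. e\<^sup>2 \<le> (D \<omega>)\<^sup>2}"
    using \<open>0 < e\<close> unfolding D_def by (intro finite_measure_mono) (auto simp: abs_le_square_iff[symmetric])
  also have "\<dots> \<le> expectation (\<lambda>\<omega>. (D \<omega>)\<^sup>2) / e\<^sup>2"
    using int \<open>0 < e\<close> by (intro integral_Markov_inequality_measure[where A="space M"]) (auto simp: D_def)
  also have "expectation (\<lambda>\<omega>. (D \<omega>)\<^sup>2) = (\<Sum>n\<in>I. \<Sum>n'\<in>I. prob (G n \<inter> G n') - c\<^sup>2)"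
    unfolding sq using prob_G
    by (simp add: Bochner_Integration.integral_sum integrable_sum integrable_centered_indicator_mult
        expectation_centered_indicator_mult)
  finally show ?thesis unfolding D_def .
qed

lemma (in prob_space) AE_LIMSEQ_of_summable_prob_deviation:
  fixes Y :: "nat \<Rightarrow> 'a \<Rightarrow> real"
  assumes [measurable]: "\<And>i. Y i \<in> borel_measurable M"
    and summable: "\<And>e. 0 < e \<Longrightarrow> summable (\<lambda>i. prob {\<omega> \<in> space M. e \<le> \<bar>Y i \<omega> - c\<bar>})"
  shows "AE \<omega> in M. (\<lambda>i. Y i \<omega>) \<longlonglongrightarrow> c"
proof -
  have bc: "AE \<omega> in M. eventually (\<lambda>i. \<bar>Y i \<omega> - c\<bar> < e) sequentially" if "0 < e" for e
  proof -
    have "AE \<omega> in M. eventually (\<lambda>i. \<omega> \<in> space M - {\<omega> \<in> space M. e \<le> \<bar>Y i \<omega> - c\<bar>}) sequentially"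
      using summable[OF that] by (intro borel_cantelli_AE1) (auto simp: less_top[symmetric])
    then show ?thesis by (rule AE_mp) (auto intro!: AE_I2 elim!: eventually_mono)
  qed
  then have "AE \<omega> in M. \<forall>m. eventually (\<lambda>i. \<bar>Y i \<omega> - c\<bar> < 1 / real (Suc m)) sequentially"
    unfolding AE_all_countable by simp
  then show ?thesis by (rule AE_mp) (auto intro!: AE_I2 LIMSEQ_I_inverse_Suc)
qed

lemma (in prob_space) sum_prob_inter_minus_sq_le:
  fixes G :: "nat \<Rightarrow> 'a set" and c \<epsilon> :: real
  assumes prob_G: "\<And>n. prob (G n) = c"
    and far: "\<And>n j. L \<le> j \<Longrightarrow> \<bar>prob (G n \<inter> G (n + j)) - c\<^sup>2\<bar> \<le> \<epsilon>" and "0 \<le> \<epsilon>"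
  shows "(\<Sum>n\<in>{1..N}. \<Sum>n'\<in>{1..N}. prob (G n \<inter> G n') - c\<^sup>2)
           \<le> real N * (2 * real L) + real N * (real N * \<epsilon>)"
proof (rule double_sum_near_far_le[OF _ _ \<open>0 \<le> \<epsilon>\<close>])
  show "prob (G n \<inter> G n') - c\<^sup>2 \<le> 1" for n n'
    using prob_le_1[of "G n \<inter> G n'"] zero_le_power2[of c] by linarith
  show "prob (G n \<inter> G n') - c\<^sup>2 \<le> \<epsilon>" if "n + L \<le> n' \<or> n' + L \<le> n" for n n'
    using that
  proof
    assume "n + L \<le> n'"
    then have "\<bar>prob (G n \<inter> G (n + (n' - n))) - c\<^sup>2\<bar> \<le> \<epsilon>" by (intro far) simp
    then show ?thesis using \<open>n + L \<le> n'\<close> by simp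
  next
    assume "n' + L \<le> n"
    then have "\<bar>prob (G n' \<inter> G (n' + (n - n'))) - c\<^sup>2\<bar> \<le> \<epsilon>" by (intro far) simp
    then show ?thesis using \<open>n' + L \<le> n\<close> by (simp add: Int_commute)
  qed
qed

lemma (in prob_space) prob_frequency_deviation_le:
  fixes G :: "nat \<Rightarrow> 'a set" and c \<epsilon> e :: real
  assumes [measurable]: "\<And>n. G n \<in> events" and prob_G: "\<And>n. prob (G n) = c"
    and far: "\<And>n j. L \<le> j \<Longrightarrow> \<bar>prob (G n \<inter> G (n + j)) - c\<^sup>2\<bar> \<le> \<epsilon>"
    and "0 \<le> \<epsilon>" "0 < e" "0 < N"
  shows "prob {\<omega> \<in> space M. e \<le> \<bar>real (card {n \<in> {1..N}. \<omega> \<in> G n}) / real N - c\<bar>}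
           \<le> (2 * real L / real N + \<epsilon>) / e\<^sup>2"
proof -
  have count: "real (card {n \<in> {1..N}. \<omega> \<in> G n}) / real N - c
      = (\<Sum>n\<in>{1..N}. indicator (G n) \<omega> - c) / real N" for \<omega>
    using \<open>0 < N\<close> card_Collect_mem_eq_sum_indicator[of "{1..N}" \<omega> G]
    by (simp add: sum_subtractf field_simps)
  have "prob {\<omega> \<in> space M. e \<le> \<bar>real (card {n \<in> {1..N}. \<omega> \<in> G n}) / real N - c\<bar>}
      = prob {\<omega> \<in> space M. e * real N \<le> \<bar>\<Sum>n\<in>{1..N}. indicator (G n) \<omega> - c\<bar>}"
    unfolding count using \<open>0 < N\<close> by (simp add: pos_le_divide_eq)
  also have "\<dots> \<le> (\<Sum>n\<in>{1..N}. \<Sum>n'\<in>{1..N}. prob (G n \<inter> G n') - c\<^sup>2) / (e * real N)\<^sup>2"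
    using \<open>0 < e\<close> \<open>0 < N\<close> by (intro prob_centered_count_ge_le prob_G) auto
  also have "\<dots> \<le> (real N * (2 * real L) + real N * (real N * \<epsilon>)) / (e * real N)\<^sup>2"
    by (intro divide_right_mono sum_prob_inter_minus_sq_le[OF prob_G far \<open>0 \<le> \<epsilon>\<close>]) auto
  also have "\<dots> = (2 * real L / real N + \<epsilon>) / e\<^sup>2"
    using \<open>0 < e\<close> \<open>0 < N\<close> by (simp add: field_simps power2_eq_square)
  finally show ?thesis .
qed

lemma (in prob_space) prob_frequency_deviation_along_powers_le:
  fixes G :: "nat \<Rightarrow> 'a set" and c K \<gamma> e :: real
  assumes G[measurable]: "\<And>n. G n \<in> events" and prob_G: "\<And>n. prob (G n) = c"
    and decorr: "\<And>n j. J \<le> j \<Longrightarrow> \<bar>prob (G n \<inter> G (n + j)) - c\<^sup>2\<bar> \<le> K * real j powr - \<gamma>"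
    and K: "0 \<le> K" and \<gamma>: "0 < \<gamma>" and a: "2 \<le> real a * \<gamma>" and J: "J \<le> (i + 1) ^ a" and e: "0 < e"
  shows "prob {\<omega> \<in> space M. e \<le> \<bar>real (card {n \<in> {1..(i + 1) ^ (a + 2)}. \<omega> \<in> G n})
                                    / real ((i + 1) ^ (a + 2)) - c\<bar>}
           \<le> (2 + K) / e\<^sup>2 * inverse ((real (i + 1))\<^sup>2)"
proof -
  define x L where "x = real (i + 1)" and "L = (i + 1) ^ a"
  have x: "1 \<le> x" unfolding x_def by simp
  have far: "\<bar>prob (G n \<inter> G (n + j)) - c\<^sup>2\<bar> \<le> K * real L powr - \<gamma>" if "L \<le> j" for n j
  proof -
    have "real L \<le> real j" using that by (rule of_nat_mono)
    moreover have "0 < real L" unfolding L_def by simp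
    ultimately have "K * real j powr - \<gamma> \<le> K * real L powr - \<gamma>"
      using K \<gamma> by (intro mult_left_mono powr_mono2') auto
    then show ?thesis using decorr[of j n] that J unfolding L_def by simp
  qed
  have "real L powr - \<gamma> = x powr - (real a * \<gamma>)"
    unfolding L_def x_def by (simp add: powr_realpow[symmetric] powr_powr)
  also have "\<dots> \<le> x powr - 2" using x a by (intro powr_mono) auto
  also have "\<dots> = inverse (x\<^sup>2)" using x by (simp add: powr_minus powr_numeral)
  finally have L_powr: "real L powr - \<gamma> \<le> inverse (x\<^sup>2)" .
  have "prob {\<omega> \<in> space M. e \<le> \<bar>real (card {n \<in> {1..(i + 1) ^ (a + 2)}. \<omega> \<in> G n})
                                    / real ((i + 1) ^ (a + 2)) - c\<bar>}
        \<le> (2 * real L / real ((i + 1) ^ (a + 2)) + K * real L powr - \<gamma>) / e\<^sup>2"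
    using K e by (intro prob_frequency_deviation_le[OF G prob_G far]) auto
  also have "2 * real L / real ((i + 1) ^ (a + 2)) = 2 * inverse (x\<^sup>2)"
  proof -
    have "real ((i + 1) ^ (a + 2)) = real L * x\<^sup>2"
      by (simp only: L_def x_def power_add of_nat_power of_nat_mult)
    then show ?thesis using x unfolding L_def by (simp add: field_simps)
  qed
  also have "(2 * inverse (x\<^sup>2) + K * real L powr - \<gamma>) / e\<^sup>2 \<le> (2 + K) / e\<^sup>2 * inverse (x\<^sup>2)"
  proof -
    have "2 * inverse (x\<^sup>2) + K * real L powr - \<gamma> \<le> (2 + K) * inverse (x\<^sup>2)"
      using L_powr K mult_left_mono[OF L_powr K] by (simp add: algebra_simps)
    then show ?thesis by (simp add: divide_right_mono)
  qed
  finally show ?thesis unfolding x_def .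
qed

text \<open>Chebyshev along the sparse subsequence \<open>N = (i + 1) ^ (a + 2)\<close> with correlation length
  \<open>L = (i + 1) ^ a\<close>: the deviation probabilities are \<open>O(L / N + L powr - \<gamma>) = O((i + 1) ^ -2)\<close>,
  which is summable, so Borel-Cantelli applies.\<close>
lemma (in prob_space) AE_frequency_tendsto_along_powers:
  fixes G :: "nat \<Rightarrow> 'a set" and c K \<gamma> :: real
  assumes G[measurable]: "\<And>n. G n \<in> events" and prob_G: "\<And>n. prob (G n) = c"
    and decorr: "\<And>n j. J \<le> j \<Longrightarrow> \<bar>prob (G n \<inter> G (n + j)) - c\<^sup>2\<bar> \<le> K * real j powr - \<gamma>"
    and K: "0 \<le> K" and \<gamma>: "0 < \<gamma>" and a: "2 \<le> real a * \<gamma>"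
  shows "AE \<omega> in M. (\<lambda>i. real (card {n \<in> {1..(i + 1) ^ (a + 2)}. \<omega> \<in> G n}) / real ((i + 1) ^ (a + 2)))
                      \<longlonglongrightarrow> c"
proof (rule AE_LIMSEQ_of_summable_prob_deviation)
  show "(\<lambda>\<omega>. real (card {n \<in> {1..(i + 1) ^ (a + 2)}. \<omega> \<in> G n}) / real ((i + 1) ^ (a + 2)))
          \<in> borel_measurable M" for i
    by (simp add: card_Collect_mem_eq_sum_indicator)
  fix e :: real assume e: "0 < e"
  have "a \<noteq> 0" using a by (intro notI) simp
  have "J \<le> (i + 1) ^ a" if "J \<le> i" for i
  proof -
    have "i + 1 \<le> (i + 1) ^ a" using \<open>a \<noteq> 0\<close> by (simp add: self_le_power)
    then show ?thesis using that by linarith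
  qed
  then have ev: "eventually (\<lambda>i. prob {\<omega> \<in> space M. e \<le> \<bar>real (card {n \<in> {1..(i + 1) ^ (a + 2)}. \<omega> \<in> G n})
                                                     / real ((i + 1) ^ (a + 2)) - c\<bar>}
                           \<le> (2 + K) / e\<^sup>2 * inverse ((real (i + 1))\<^sup>2)) sequentially"
    by (intro eventually_sequentiallyI[of J] prob_frequency_deviation_along_powers_le[OF G prob_G decorr K \<gamma> a _ e])
  have summ: "summable (\<lambda>i. (2 + K) / e\<^sup>2 * inverse ((real (i + 1))\<^sup>2))"
    using summable_ignore_initial_segment[OF inverse_power_summable[of 2], of 1]
    by (intro summable_mult) (simp add: power_inverse)
  show "summable (\<lambda>i. prob {\<omega> \<in> space M. e \<le> \<bar>real (card {n \<in> {1..(i + 1) ^ (a + 2)}. \<omega> \<in> G n})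
                                        / real ((i + 1) ^ (a + 2)) - c\<bar>})"
    using ev by (intro summable_comparison_test_ev[OF _ summ]) (simp add: abs_of_nonneg)
qed

lemma (in prob_space) AE_frequency_tendsto:
  fixes G :: "nat \<Rightarrow> 'a set" and c K \<gamma> :: real
  assumes G[measurable]: "\<And>n. G n \<in> events" and prob_G: "\<And>n. prob (G n) = c"
    and decorr: "eventually (\<lambda>j. \<forall>n. \<bar>prob (G n \<inter> G (n + j)) - c\<^sup>2\<bar> \<le> K * real j powr - \<gamma>) sequentially"
    and \<gamma>: "0 < \<gamma>"
  shows "AE \<omega> in M. (\<lambda>N. real (card {n \<in> {1..N}. \<omega> \<in> G n}) / real N) \<longlonglongrightarrow> c"
proof -
  obtain J where J: "\<And>n j. J \<le> j \<Longrightarrow> \<bar>prob (G n \<inter> G (n + j)) - c\<^sup>2\<bar> \<le> K * real j powr - \<gamma>"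
    using decorr unfolding eventually_sequentially by auto
  have "0 \<le> K * real (Suc J) powr - \<gamma>" using J[of "Suc J" 0] by linarith
  then have K: "0 \<le> K" by (simp add: zero_le_mult_iff)
  define a where "a = nat \<lceil>2 / \<gamma>\<rceil>"
  have "2 / \<gamma> \<le> real a" unfolding a_def by linarith
  then have a: "2 \<le> real a * \<gamma>" using \<gamma> by (simp add: field_simps)
  define Mi where "Mi i = (i + 1) ^ (a + 2)" for i :: nat
  have Mi: "strict_mono Mi" "0 < Mi 0" unfolding Mi_def
    by (intro strict_monoI_Suc power_strict_mono, simp_all)
  have "(\<lambda>i. real (Suc (Suc i)) / real (Suc i)) \<longlonglongrightarrow> 1"
    using LIMSEQ_Suc[OF LIMSEQ_Suc_n_over_n] by simp
  then have "(\<lambda>i. (real (Suc (Suc i)) / real (Suc i)) ^ (a + 2)) \<longlonglongrightarrow> 1"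
    using tendsto_power[of _ 1 _ "a + 2"] by (metis power_one)
  then have ratio: "(\<lambda>i. real (Mi (Suc i)) / real (Mi i)) \<longlonglongrightarrow> 1"
    by (simp only: Mi_def of_nat_power power_divide Suc_eq_plus1)
  have "AE \<omega> in M. (\<lambda>i. real (card {n \<in> {1..Mi i}. \<omega> \<in> G n}) / real (Mi i)) \<longlonglongrightarrow> c"
    unfolding Mi_def using AE_frequency_tendsto_along_powers[OF G prob_G J K \<gamma> a] .
  then show ?thesis
  proof (rule AE_mp, intro AE_I2 impI)
    fix \<omega> assume "(\<lambda>i. real (card {n \<in> {1..Mi i}. \<omega> \<in> G n}) / real (Mi i)) \<longlonglongrightarrow> c"
    moreover have "mono (\<lambda>N. real (card {n \<in> {1..N}. \<omega> \<in> G n}))"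
      by (intro monoI of_nat_mono card_mono) auto
    ultimately show "(\<lambda>N. real (card {n \<in> {1..N}. \<omega> \<in> G n}) / real N) \<longlonglongrightarrow> c"
      by (intro LIMSEQ_average_of_subseq[OF _ _ Mi ratio]) auto
  qed
qed

section \<open>Independent identically distributed sequences\<close>

locale iid_sequence = prob_space M for M :: "'a measure" +
  fixes X :: "'a \<Rightarrow> 'b::topological_space" and Xs :: "nat \<Rightarrow> 'a \<Rightarrow> 'b"
  assumes X_measurable[measurable]: "X \<in> borel_measurable M"
    and Xs_measurable[measurable]: "\<And>k. Xs k \<in> borel_measurable M"
    and Xs_indep: "indep_vars (\<lambda>_. borel) Xs UNIV"
    and Xs_distr: "\<And>k. distr M borel (Xs k) = distr M borel X"
begin

definition law :: "'b measure" where
  "law = distr M borel X"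

lemma sets_law [simp]: "sets law = sets borel" and space_law [simp]: "space law = UNIV"
  unfolding law_def by auto

lemma prob_space_law: "prob_space law"
  unfolding law_def by (rule prob_space_distr) simp

lemma prob_X_in:
  assumes "B \<in> sets borel"
  shows "prob {\<omega> \<in> space M. X \<omega> \<in> B} = measure law B"
  unfolding law_def using assms by (subst measure_distr) (auto simp: vimage_def Int_def conj_commute)

lemma prob_Xs_in:
  assumes "B \<in> sets borel"
  shows "prob {\<omega> \<in> space M. Xs k \<omega> \<in> B} = measure law B"
  unfolding law_def Xs_distr[of k, symmetric] using assms
  by (subst measure_distr) (auto simp: vimage_def Int_def conj_commute)

lemma law_Int_ge:
  assumes "A \<in> sets borel" "B \<in> sets borel"
  shows "measure law B - (1 - measure law A) \<le> measure law (A \<inter> B)"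
proof -
  interpret law: prob_space law by (rule prob_space_law)
  have "measure law (A \<union> B) = measure law A + measure law B - measure law (A \<inter> B)"
    using assms by (intro measure_Un3) (auto simp: law.fmeasurable_eq_sets)
  moreover have "measure law (A \<union> B) \<le> 1" by (rule law.prob_le_1)
  ultimately show ?thesis by linarith
qed

lemma prob_all_Xs_in_lessThan:
  assumes "\<And>m. C m \<in> sets borel"
  shows "prob {\<omega> \<in> space M. \<forall>m<N. Xs m \<omega> \<in> C m} = (\<Prod>m<N. measure law (C m))"
proof (cases "N = 0")
  case False
  have "indep_sets (\<lambda>i. {Xs i -` A \<inter> space M | A. A \<in> sets borel}) UNIV"
    using Xs_indep unfolding indep_vars_def2 by simp
  then have "prob (\<Inter>m\<in>{..<N}. Xs m -` C m \<inter> space M) = (\<Prod>m<N. prob (Xs m -` C m \<inter> space M))"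
    using False assms by (intro indep_setsD) auto
  moreover have "Xs m -` C m \<inter> space M = {\<omega> \<in> space M. Xs m \<omega> \<in> C m}" for m by auto
  moreover have "{\<omega> \<in> space M. \<forall>m<N. Xs m \<omega> \<in> C m} = (\<Inter>m\<in>{..<N}. Xs m -` C m \<inter> space M)"
    using False by auto
  ultimately show ?thesis using prob_Xs_in[OF assms] by simp
qed (simp add: prob_space)

lemma LIMSEQ_prod_law:
  assumes [measurable]: "\<And>m. C m \<in> sets borel"
  shows "(\<lambda>N. \<Prod>m<N. measure law (C m)) \<longlonglongrightarrow> prob {\<omega> \<in> space M. \<forall>m. Xs m \<omega> \<in> C m}"
proof -
  define A where "A N = {\<omega> \<in> space M. \<forall>m<N. Xs m \<omega> \<in> C m}" for N
  have "range A \<subseteq> events" "decseq A" unfolding A_def decseq_def by auto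
  then have "(\<lambda>N. prob (A N)) \<longlonglongrightarrow> prob (\<Inter>N. A N)" by (rule finite_Lim_measure_decseq)
  moreover have "(\<Inter>N. A N) = {\<omega> \<in> space M. \<forall>m. Xs m \<omega> \<in> C m}" unfolding A_def by auto
  ultimately show ?thesis unfolding A_def prob_all_Xs_in_lessThan[OF assms] by simp
qed

definition hits :: "(nat \<Rightarrow> 'b set) \<Rightarrow> nat \<Rightarrow> 'a set" where
  "hits B n = {\<omega> \<in> space M. \<forall>k. Xs (k + n) \<omega> \<in> B k}"

lemma hits_in_events [measurable]:
  assumes [measurable]: "\<And>k. B k \<in> sets borel"
  shows "hits B n \<in> events"
  unfolding hits_def by measurable

lemma LIMSEQ_prod_law_hits:
  assumes B: "\<And>k. B k \<in> sets borel"
  shows "(\<lambda>N. \<Prod>k<N. measure law (B k)) \<longlonglongrightarrow> prob (hits B n)"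
proof -
  define C where "C m = (if n \<le> m then B (m - n) else UNIV)" for m
  have C_borel: "C m \<in> sets borel" for m unfolding C_def using B by auto
  have eq: "{\<omega> \<in> space M. \<forall>m. Xs m \<omega> \<in> C m} = hits B n"
    unfolding hits_def C_def by (auto, metis add_diff_cancel_right' le_add2) (metis le_add_diff_inverse2)
  have "measure law UNIV = 1"
    using prob_space.prob_space[OF prob_space_law] by simp
  then have prod_eq: "(\<Prod>m<n + L. measure law (C m)) = (\<Prod>k<L. measure law (B k))" for L
    unfolding prod_lessThan_add by (simp add: C_def)
  have "(\<lambda>L. \<Prod>m<L + n. measure law (C m)) \<longlonglongrightarrow> prob {\<omega> \<in> space M. \<forall>m. Xs m \<omega> \<in> C m}"
    by (rule LIMSEQ_ignore_initial_segment[OF LIMSEQ_prod_law[OF C_borel]])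
  then show ?thesis by (simp only: add.commute[of _ n] prod_eq eq)
qed

lemma prob_hits_eq:
  assumes "\<And>k. B k \<in> sets borel"
  shows "prob (hits B n) = prob (hits B 0)"
  using LIMSEQ_unique[OF LIMSEQ_prod_law_hits[OF assms] LIMSEQ_prod_law_hits[OF assms]] .

lemma law_le_1: "measure law A \<le> 1"
  using prob_space.prob_le_1[OF prob_space_law] by simp

lemma hits_Int_hits_shift:
  "hits B n \<inter> hits B (n + j) = hits (\<lambda>k. B k \<inter> (if j \<le> k then B (k - j) else UNIV)) n"
proof (intro set_eqI iffI)
  fix \<omega> assume "\<omega> \<in> hits B n \<inter> hits B (n + j)"
  then have \<omega>: "\<omega> \<in> space M" and B: "Xs (k + n) \<omega> \<in> B k"
    and B_shift: "Xs ((k - j) + (n + j)) \<omega> \<in> B (k - j)" for k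
    unfolding hits_def by blast+
  have "Xs (k + n) \<omega> \<in> B (k - j)" if "j \<le> k" for k
  proof -
    have "(k - j) + (n + j) = k + n" using that by simp
    then show ?thesis using B_shift[of k] by simp
  qed
  with B have "Xs (k + n) \<omega> \<in> B k \<inter> (if j \<le> k then B (k - j) else UNIV)" for k
    by simp
  with \<omega> show "\<omega> \<in> hits (\<lambda>k. B k \<inter> (if j \<le> k then B (k - j) else UNIV)) n"
    unfolding hits_def by blast
next
  fix \<omega> assume "\<omega> \<in> hits (\<lambda>k. B k \<inter> (if j \<le> k then B (k - j) else UNIV)) n"
  then have \<omega>: "\<omega> \<in> space M" and D: "Xs (k + n) \<omega> \<in> B k \<inter> (if j \<le> k then B (k - j) else UNIV)" for k
    unfolding hits_def by blast+
  have "Xs (k + (n + j)) \<omega> \<in> B k" for k using D[of "k + j"] by (simp add: add_ac)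
  with \<omega> D show "\<omega> \<in> hits B n \<inter> hits B (n + j)"
    unfolding hits_def by blast
qed

lemma prob_hits_Int_le:
  assumes B: "\<And>k. B k \<in> sets borel" and summable: "summable (\<lambda>k. 1 - measure law (B k))"
  shows "\<bar>prob (hits B n \<inter> hits B (n + j)) - (prob (hits B 0))\<^sup>2\<bar> \<le> (\<Sum>i. 1 - measure law (B (i + j)))"
proof (rule lim_prod_overlap_bound[OF _ _ _ _ summable])
  interpret law: prob_space law by (rule prob_space_law)
  define D where "D k = B k \<inter> (if j \<le> k then B (k - j) else UNIV)" for k
  have D: "D k \<in> sets borel" for k unfolding D_def using B by auto
  show "(\<lambda>N. \<Prod>k<N. measure law (B k)) \<longlonglongrightarrow> prob (hits B 0)" by (rule LIMSEQ_prod_law_hits[OF B])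
  show "(\<lambda>N. \<Prod>k<N. measure law (D k)) \<longlonglongrightarrow> prob (hits B n \<inter> hits B (n + j))"
    unfolding hits_Int_hits_shift D_def[symmetric] by (rule LIMSEQ_prod_law_hits[OF D])
  show "measure law (D k) = measure law (B k)" if "k < j" for k
    using that by (simp add: D_def)
  show "measure law (D k) \<le> measure law (B (k - j))" if "j \<le> k" for k
    using that B by (simp add: D_def law.finite_measure_mono)
  show "measure law (B (k - j)) - (1 - measure law (B k)) \<le> measure law (D k)" if "j \<le> k" for k
    using that law_Int_ge[OF B B] by (simp add: D_def)
qed (use law_le_1 in auto)

lemma
  fixes B :: "nat \<Rightarrow> 'b set" and K \<beta> :: real
  assumes B[measurable]: "\<And>k. B k \<in> sets borel" and pos: "\<And>k. 0 < measure law (B k)"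
    and tail: "eventually (\<lambda>k. 1 - measure law (B k) \<le> K * real k powr - (1 + \<beta>)) sequentially"
    and \<beta>: "0 < \<beta>"
  shows prob_hits_gt_0: "0 < prob (hits B 0)"
    and AE_frequency_hits:
      "AE \<omega> in M. (\<lambda>N. real (card {n \<in> {1..N}. \<omega> \<in> hits B n}) / real N) \<longlonglongrightarrow> prob (hits B 0)"
proof -
  have q: "0 \<le> 1 - measure law (B k)" for k using law_le_1 by simp
  have summable: "summable (\<lambda>k. 1 - measure law (B k))"
    by (rule summable_of_powr_bound[OF q \<beta> tail])
  show "0 < prob (hits B 0)"
    using pos law_le_1 summable by (intro LIMSEQ_prod_pos[OF _ _ _ LIMSEQ_prod_law_hits[OF B]]) auto
  obtain K' where "eventually (\<lambda>j. (\<Sum>i. 1 - measure law (B (i + j))) \<le> K' * real j powr - (\<beta> / 2)) sequentially"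
    using tail_suminf_powr_bound[OF q \<beta> tail] by blast
  then have "eventually (\<lambda>j. \<forall>n. \<bar>prob (hits B n \<inter> hits B (n + j)) - (prob (hits B 0))\<^sup>2\<bar>
                                   \<le> K' * real j powr - (\<beta> / 2)) sequentially"
    by (rule eventually_mono) (use prob_hits_Int_le[OF B summable] order_trans in blast)
  then show "AE \<omega> in M. (\<lambda>N. real (card {n \<in> {1..N}. \<omega> \<in> hits B n}) / real N) \<longlonglongrightarrow> prob (hits B 0)"
    using \<beta> by (intro AE_frequency_tendsto[of "hits B" "prob (hits B 0)" K' "\<beta> / 2"] prob_hits_eq) auto
qed

end

section \<open>The random vector and its shifted tails\<close>

lemma lp_norm_Tn_diff_le_geometric:
  fixes \<tau> \<epsilon> C :: real
  assumes p: "1 \<le> p" and adm: "admissible p u"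
    and h: "\<And>m. h m = (\<Sum>k\<le>n. c k * u k m)"
    and uC: "\<And>k. lp_norm p (u k) \<le> C * \<tau> ^ k" and \<tau>: "0 < \<tau>" "\<tau> < 1"
    and close: "\<And>k. k \<le> n \<Longrightarrow> norm (x (k + n) - c k) \<le> \<epsilon> / sqrt \<tau> ^ k"
  shows "lp_norm p (\<lambda>m. Tn u n x m - h m) \<le> \<epsilon> * C / (1 - sqrt \<tau>)"
proof -
  define s where "s = sqrt \<tau>"
  have s: "0 < s" "s < 1" and ss: "s * s = \<tau>" using \<tau> unfolding s_def by auto
  have "norm (x (0 + n) - c 0) \<le> \<epsilon>" using close[of 0] by simp
  then have \<epsilon>: "0 \<le> \<epsilon>" by (rule order_trans[OF norm_ge_zero])
  have C: "0 \<le> C" using uC[of 0] lp_norm_nonneg[of p "u 0"] by simp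
  have "lp_norm p (\<lambda>m. Tn u n x m - h m) \<le> (\<Sum>k\<le>n. \<epsilon> / s ^ k * lp_norm p (u k))"
    unfolding s_def by (rule lp_norm_Tn_diff_le[OF p adm h close])
  also have "\<dots> \<le> (\<Sum>k\<le>n. \<epsilon> * C * s ^ k)"
  proof (intro sum_mono)
    fix k
    have "\<epsilon> / s ^ k * lp_norm p (u k) \<le> \<epsilon> / s ^ k * (C * (s * s) ^ k)"
      using uC[of k] \<epsilon> s unfolding ss by (intro mult_left_mono) auto
    also have "\<dots> = \<epsilon> * C * s ^ k" using s by (simp add: power_mult_distrib field_simps)
    finally show "\<epsilon> / s ^ k * lp_norm p (u k) \<le> \<epsilon> * C * s ^ k" .
  qed
  also have "\<dots> = \<epsilon> * C * (\<Sum>k<Suc n. s ^ k)" by (simp add: sum_distrib_left lessThan_Suc_atMost)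
  also have "\<dots> \<le> \<epsilon> * C * (1 / (1 - s))"
  proof (intro mult_left_mono)
    show "(\<Sum>k<Suc n. s ^ k) \<le> 1 / (1 - s)"
      using s suminf_geometric[of s] sum_le_suminf[OF summable_geometric[of s], of "{..<Suc n}"] by simp
  qed (use \<epsilon> C in simp)
  finally show ?thesis unfolding s_def by simp
qed

text \<open>With \<open>q = 1 / sqrt \<tau>\<close> the log-tail condition makes \<open>P(|X| \<ge> q ^ k)\<close> summable, so by
  Borel-Cantelli \<open>|X k| < q ^ k\<close> eventually, and the terms are dominated by \<open>C (sqrt \<tau>) ^ k\<close>.\<close>
lemma AE_summable_norm_mult_geometric:
  fixes X :: "'a \<Rightarrow> 'b::real_normed_vector" and w :: "nat \<Rightarrow> real" and \<beta> K0 C \<tau> :: real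
  assumes "iid_sequence M X Xs"
    and tail: "eventually (\<lambda>r. ln r powr (1 + \<beta>) * measure M {\<omega> \<in> space M. norm (X \<omega>) \<ge> r} \<le> K0) at_top"
    and \<beta>: "0 < \<beta>" and K0: "0 \<le> K0"
    and w: "\<And>k. 0 \<le> w k" "\<And>k. w k \<le> C * \<tau> ^ k" and \<tau>: "0 < \<tau>" "\<tau> < 1"
  shows "AE \<omega> in M. summable (\<lambda>k. norm (Xs k \<omega>) * w k)"
proof -
  interpret iid_sequence M X Xs by fact
  define s where "s = sqrt \<tau>"
  have s: "0 < s" "s < 1" and ss: "s * s = \<tau>" using \<tau> unfolding s_def by auto
  define E where "E k = {\<omega> \<in> space M. norm (Xs k \<omega>) \<ge> (1 / s) ^ k}" for k
  have [measurable]: "E k \<in> events" for k unfolding E_def by measurable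
  have "prob (E k) = measure M {\<omega> \<in> space M. norm (X \<omega>) \<ge> (1 / s) ^ k}" for k
  proof -
    have "{z :: 'b. norm z \<ge> (1 / s) ^ k} \<in> sets borel" by measurable
    from prob_Xs_in[OF this] prob_X_in[OF this] show ?thesis unfolding E_def by simp
  qed
  moreover have "\<exists>K\<ge>0. eventually (\<lambda>k. measure M {\<omega> \<in> space M. norm (X \<omega>) \<ge> 1 * (1 / s) ^ k}
                                               \<le> K * real k powr - (1 + \<beta>)) sequentially"
    by (rule log_tail_geometric_bound[OF _ \<beta> K0 tail]) (use s in auto)
  then obtain K1 where "eventually (\<lambda>k. measure M {\<omega> \<in> space M. norm (X \<omega>) \<ge> (1 / s) ^ k}
                                        \<le> K1 * real k powr - (1 + \<beta>)) sequentially"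
    by auto
  ultimately have "summable (\<lambda>k. prob (E k))"
    using \<beta> by (intro summable_of_powr_bound) auto
  then have "AE \<omega> in M. eventually (\<lambda>k. \<omega> \<in> space M - E k) sequentially"
    by (intro borel_cantelli_AE1) (auto simp: less_top[symmetric])
  then show ?thesis
  proof (rule AE_mp, intro AE_I2 impI)
    fix \<omega> assume "eventually (\<lambda>k. \<omega> \<in> space M - E k) sequentially"
    then have "eventually (\<lambda>k. norm (norm (Xs k \<omega>) * w k) \<le> C * s ^ k) sequentially"
    proof (rule eventually_mono)
      fix k assume "\<omega> \<in> space M - E k"
      then have "norm (Xs k \<omega>) \<le> (1 / s) ^ k" unfolding E_def by auto
      then have "norm (Xs k \<omega>) * w k \<le> (1 / s) ^ k * (C * (s * s) ^ k)"
        using w[of k] s unfolding ss by (intro mult_mono) auto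
      also have "\<dots> = C * s ^ k" using s by (simp add: power_mult_distrib field_simps)
      finally show "norm (norm (Xs k \<omega>) * w k) \<le> C * s ^ k" using w by simp
    qed
    then show "summable (\<lambda>k. norm (Xs k \<omega>) * w k)"
      using s by (intro summable_comparison_test_ev[OF _ summable_mult[OF summable_geometric]]) auto
  qed
qed

lemma measure_distr_ball_geometric_tail:
  fixes X :: "'a \<Rightarrow> 'b::real_normed_vector" and \<beta> K0 e q :: real
  assumes "prob_space M" and [measurable]: "X \<in> borel_measurable M"
    and tail: "eventually (\<lambda>r. ln r powr (1 + \<beta>) * measure M {\<omega> \<in> space M. norm (X \<omega>) \<ge> r} \<le> K0) at_top"
    and \<beta>: "0 < \<beta>" and K0: "0 \<le> K0" and e: "0 < e" and q: "1 < q"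
  shows "\<exists>K. eventually (\<lambda>k. 1 - measure (distr M borel X) (ball 0 (e * q ^ k))
                            \<le> K * real k powr - (1 + \<beta>)) sequentially"
proof -
  interpret law: prob_space "distr M borel X" by (rule prob_space.prob_space_distr) fact+
  have "1 - measure (distr M borel X) (ball 0 r) = measure M {\<omega> \<in> space M. norm (X \<omega>) \<ge> r}" for r
  proof -
    have "UNIV - ball 0 r = {z :: 'b. norm z \<ge> r}" by auto
    moreover have "{z :: 'b. norm z \<ge> r} \<in> sets borel" by measurable
    ultimately show ?thesis
      using law.prob_compl[of "ball 0 r"] by (simp add: measure_distr vimage_def Int_def conj_commute)
  qed
  moreover have "\<exists>K\<ge>0. eventually (\<lambda>k. measure M {\<omega> \<in> space M. norm (X \<omega>) \<ge> e * q ^ k}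
                                       \<le> K * real k powr - (1 + \<beta>)) sequentially"
    by (rule log_tail_geometric_bound[OF _ \<beta> K0 tail e q]) simp
  ultimately show ?thesis by auto
qed

text \<open>\<open>T n v\<close> is close to \<open>h = (\<Sum>k\<le>N. c k * u k)\<close> as soon as each \<open>X (k + n)\<close> lies in the ball
  \<open>B k\<close> around \<open>c k\<close> of radius \<open>\<epsilon> / (sqrt \<tau>) ^ k\<close>.  These radii grow geometrically, so
  \<open>\<Sum>k. 1 - P(X \<in> B k)\<close> converges at a polynomial rate, and the events
  \<open>\<forall>k. X (k + n) \<in> B k\<close> have a positive almost sure frequency.\<close>
lemma AE_density_Tn_close:
  fixes X :: "'a \<Rightarrow> complex" and h :: "nat \<Rightarrow> complex" and \<beta> K0 C \<tau> \<eta> :: real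
  assumes "iid_sequence M X Xs"
    and tail: "eventually (\<lambda>r. ln r powr (1 + \<beta>) * measure M {\<omega> \<in> space M. norm (X \<omega>) \<ge> r} \<le> K0) at_top"
    and \<beta>: "0 < \<beta>" and K0: "0 \<le> K0"
    and supp: "\<And>U. open U \<Longrightarrow> U \<noteq> {} \<Longrightarrow> 0 < measure M {\<omega> \<in> space M. X \<omega> \<in> U}"
    and p: "1 \<le> p" and adm: "admissible p u"
    and uC: "\<And>k. lp_norm p (u k) \<le> C * \<tau> ^ k" and C: "0 < C" and \<tau>: "0 < \<tau>" "\<tau> < 1"
    and h: "c00 h" and \<eta>: "0 < \<eta>"
  shows "AE \<omega> in M. \<exists>A. has_pos_density A \<and> (\<forall>n\<in>A. lp_norm p (\<lambda>m. Tn u n (\<lambda>k. Xs k \<omega>) m - h m) < \<eta>)"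
proof -
  interpret iid_sequence M X Xs by fact
  obtain N c where c0: "\<And>k. N < k \<Longrightarrow> c k = 0"
    and hc: "\<And>n m. N \<le> n \<Longrightarrow> h m = (\<Sum>k\<le>n. c k * u k m)"
    using c00_expansion[OF adm h] by blast
  define s \<epsilon> where "s = sqrt \<tau>" and "\<epsilon> = \<eta> * (1 - s) / (2 * C)"
  have s: "0 < s" "s < 1" using \<tau> unfolding s_def by auto
  have \<epsilon>: "0 < \<epsilon>" unfolding \<epsilon>_def using \<eta> s C by simp
  define B where "B k = ball (c k) (\<epsilon> * (1 / s) ^ k)" for k
  have B[measurable]: "B k \<in> sets borel" for k unfolding B_def by simp
  have "0 < \<epsilon> * (1 / s) ^ k" for k using \<epsilon> s by simp
  then have B_pos: "0 < measure law (B k)" for k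
    using supp[of "B k"] prob_X_in[OF B] unfolding B_def by (simp add: not_le)
  obtain K1 where "eventually (\<lambda>k. 1 - measure law (ball 0 (\<epsilon> * (1 / s) ^ k))
                                       \<le> K1 * real k powr - (1 + \<beta>)) sequentially"
    using measure_distr_ball_geometric_tail[OF prob_space_axioms X_measurable tail \<beta> K0 \<epsilon>, of "1 / s"] s
    unfolding law_def by auto
  then have B_tail: "eventually (\<lambda>k. 1 - measure law (B k) \<le> K1 * real k powr - (1 + \<beta>)) sequentially"
    using eventually_gt_at_top[of N] by eventually_elim (simp add: B_def c0)
  note freq = AE_frequency_hits[OF B B_pos B_tail \<beta>] and pos = prob_hits_gt_0[OF B B_pos B_tail \<beta>]
  show ?thesis using freq
  proof (rule AE_mp, intro AE_I2 impI)
    fix \<omega> assume "(\<lambda>N. real (card {n \<in> {1..N}. \<omega> \<in> hits B n}) / real N) \<longlonglongrightarrow> prob (hits B 0)"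
    then have "has_pos_density {n. N \<le> n \<and> \<omega> \<in> hits B n}"
      using pos by (rule has_pos_density_of_frequency)
    moreover have "lp_norm p (\<lambda>m. Tn u n (\<lambda>k. Xs k \<omega>) m - h m) < \<eta>" if "N \<le> n" "\<omega> \<in> hits B n" for n
    proof -
      have "norm (Xs (k + n) \<omega> - c k) \<le> \<epsilon> / sqrt \<tau> ^ k" for k
        using that(2) unfolding hits_def B_def s_def
        by (auto simp: dist_norm norm_minus_commute power_one_over less_imp_le)
      then have "lp_norm p (\<lambda>m. Tn u n (\<lambda>k. Xs k \<omega>) m - h m) \<le> \<epsilon> * C / (1 - sqrt \<tau>)"
        by (intro lp_norm_Tn_diff_le_geometric[OF p adm hc[OF that(1)] uC \<tau>])
      also have "\<dots> = \<eta> / 2" using s C unfolding \<epsilon>_def s_def[symmetric] by (simp add: field_simps)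
      finally show ?thesis using \<eta> by simp
    qed
    ultimately show "\<exists>A. has_pos_density A \<and> (\<forall>n\<in>A. lp_norm p (\<lambda>m. Tn u n (\<lambda>k. Xs k \<omega>) m - h m) < \<eta>)"
      by blast
  qed
qed

theorem theorem3p1:
  fixes p :: real and u :: "nat \<Rightarrow> nat \<Rightarrow> complex"
    and M :: "'a measure" and X :: "'a \<Rightarrow> complex" and Xs :: "nat \<Rightarrow> 'a \<Rightarrow> complex"
  assumes p: "1 \<le> p"
    and adm: "admissible p u"
    and decay: "\<exists>C>0. \<exists>\<tau>. 0 < \<tau> \<and> \<tau> < 1 \<and> (\<forall>k. lp_norm p (u k) \<le> C * \<tau> ^ k)"
    and P: "prob_space M"
    and X_rv: "X \<in> borel_measurable M"
    and supp: "\<forall>U. open U \<and> U \<noteq> {} \<longrightarrow> measure M {\<omega> \<in> space M. X \<omega> \<in> U} > 0"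
    and tail: "\<exists>\<beta>>0. Limsup at_top (\<lambda>r::real. ereal ((ln r) powr (1 + \<beta>) *
                  measure M {\<omega> \<in> space M. norm (X \<omega>) \<ge> r})) < \<infinity>"
    and Xs_rv: "\<forall>k. Xs k \<in> borel_measurable M"
    and Xs_indep: "prob_space.indep_vars M (\<lambda>_. borel) Xs UNIV"
    and Xs_distr: "\<forall>k. distr M borel (Xs k) = distr M borel X"
  shows "(AE \<omega> in M. summable (\<lambda>k. norm (Xs k \<omega>) * lp_norm p (u k)) \<and>
                   series_vec u (\<lambda>k. Xs k \<omega>) \<in> Ep p u) \<and>
         (\<forall>h \<eta>. c00 h \<and> \<eta> > 0 \<longrightarrow>
            (AE \<omega> in M. \<exists>A. has_pos_density A \<and>
                (\<forall>n\<in>A. lp_norm p (\<lambda>m. Tn u n (\<lambda>k. Xs k \<omega>) m - h m) < \<eta>)))"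
proof -
  have iid: "iid_sequence M X Xs"
    using P X_rv Xs_rv Xs_indep Xs_distr by (intro iid_sequence.intro iid_sequence_axioms.intro) auto
  obtain \<beta> where \<beta>: "0 < \<beta>" and L: "Limsup at_top (\<lambda>r::real. ereal ((ln r) powr (1 + \<beta>) *
                  measure M {\<omega> \<in> space M. norm (X \<omega>) \<ge> r})) < \<infinity>"
    using tail by blast
  then obtain K0 where K0: "0 \<le> K0"
    and T: "eventually (\<lambda>r. ln r powr (1 + \<beta>) * measure M {\<omega> \<in> space M. norm (X \<omega>) \<ge> r} \<le> K0) at_top"
    using Limsup_less_PInf_imp_eventually_le[OF L] by blast
  obtain C \<tau> where C: "0 < C" and \<tau>: "0 < \<tau>" "\<tau> < 1" and uC: "\<And>k. lp_norm p (u k) \<le> C * \<tau> ^ k"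
    using decay by blast
  have "AE \<omega> in M. summable (\<lambda>k. norm (Xs k \<omega>) * lp_norm p (u k))"
    using AE_summable_norm_mult_geometric[OF iid T \<beta> K0 lp_norm_nonneg uC \<tau>] .
  then have "AE \<omega> in M. summable (\<lambda>k. norm (Xs k \<omega>) * lp_norm p (u k)) \<and>
                        series_vec u (\<lambda>k. Xs k \<omega>) \<in> Ep p u"
    unfolding Ep_def by (rule AE_mp) (intro AE_I2 impI conjI CollectI exI[of _ "\<lambda>k. Xs k _"]; simp)
  moreover have "AE \<omega> in M. \<exists>A. has_pos_density A \<and>
                   (\<forall>n\<in>A. lp_norm p (\<lambda>m. Tn u n (\<lambda>k. Xs k \<omega>) m - h m) < \<eta>)" if "c00 h" "\<eta> > 0" for h \<eta>
    using supp by (intro AE_density_Tn_close[OF iid T \<beta> K0 _ p adm uC C \<tau> that]) auto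
  ultimately show ?thesis by simp
qed

end
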